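(* Let $0<p_0,p_1,q_0,q_1\le\infty$, $s\in\mathbb R$, $t>0$ with $t>d(1/p_0-1/p_1)_+$, and let $\mathcal B=(e_{j,\lambda})$ be the canonical unit-vector basis. Then $$ \sup\big\{\sigma_n(a,\mathcal B)_{b^s_{p_1,q_1}}:\ \|a\|_{b^{s+t}_{p_0,q_0}}\le1\big\}\asymp n^{-t/d}. $$
   Context: Sequence spaces: $\nabla=(\nabla_j)_{j\ge0}$ finite subsets of $\{1,\dots,2^d-1\}\times\mathbb Z^d$ with $C_1\le2^{-jd}|\nabla_j|\le C_2$ for all $j\ge J$ (some $0<C_1\le C_2$, $J\in\mathbb N$); $b^s_{p,q}=b^s_{p,q}(\nabla)$ is the space of sequences $a=(a_{j,\lambda})$ with $\|a\|_{b^s_{p,q}}=\big(\sum_{j\ge0}2^{j(s+d(1/2-1/p))q}(\sum_{\lambda\in\nabla_j}|a_{j,\lambda}|^p)^{q/p}\big)^{1/q}<\infty$ (sup if $q=\infty$). $e_{j,\lambda}$ is the sequence with entry $1$ at position $(j,\lambda)$ and $0$ elsewhere. For a quasi-normed space $X$ and $\mathcal B=\{h_i\}\subset X$, $\sigma_n(u,\mathcal B)_X=\inf_{i_1,\dots,i_n}\inf_{c_1,\dots,c_n}\|u-\sum_{k=1}^nc_kh_{i_k}\|_X$. $\asymp$: two-sided bounds with constants independent of $n$. *)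

theory Defs
  imports "HOL-Analysis.Analysis"
begin

text \<open>Indices: a level j :: nat and a position lambda in {1..2^d-1} x Z^d,
  where Z^d is rendered as int^'d and d = CARD('d).  Exponents p, q range over (0, infinity] as ereals.\<close>

type_synonym 'd idx = "nat \<times> (int ^ 'd)"
type_synonym 'd sq = "nat \<Rightarrow> 'd idx \<Rightarrow> real"

definition inv_exp :: "ereal \<Rightarrow> real" where
  "inv_exp p = (if p = \<infinity> then 0 else 1 / real_of_ereal p)"

definition admissible_nabla :: "(nat \<Rightarrow> ('d::finite) idx set) \<Rightarrow> bool" where
  "admissible_nabla Nab \<longleftrightarrow>
     (\<forall>j. finite (Nab j) \<and> Nab j \<subseteq> {1..2 ^ CARD('d) - 1} \<times> (UNIV :: (int ^ 'd) set)) \<and>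
     (\<exists>C1 C2 J. 0 < C1 \<and> C1 \<le> C2 \<and>
        (\<forall>j\<ge>J. C1 \<le> 2 powr (- real j * CARD('d)) * real (card (Nab j))
               \<and> 2 powr (- real j * CARD('d)) * real (card (Nab j)) \<le> C2))"

definition block_norm :: "ereal \<Rightarrow> ('d::finite) idx set \<Rightarrow> ('d idx \<Rightarrow> real) \<Rightarrow> real" where
  "block_norm p A f =
     (if p = \<infinity> then (if A = {} then 0 else Max ((\<lambda>x. \<bar>f x\<bar>) ` A))
      else (\<Sum>x\<in>A. \<bar>f x\<bar> powr real_of_ereal p) powr (1 / real_of_ereal p))"

definition bnorm :: "(nat \<Rightarrow> ('d::finite) idx set) \<Rightarrow> real \<Rightarrow> ereal \<Rightarrow> ereal \<Rightarrow> 'd sq \<Rightarrow> ereal" where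
  "bnorm Nab s p q a =
     (let c = (\<lambda>j. 2 powr (real j * (s + real CARD('d) * (1/2 - inv_exp p)))
                   * block_norm p (Nab j) (a j))
      in if q = \<infinity> then (SUP j. ereal (c j))
         else if summable (\<lambda>j. c j powr real_of_ereal q)
              then ereal ((\<Sum>j. c j powr real_of_ereal q) powr (1 / real_of_ereal q))
              else \<infinity>)"

definition on_nabla :: "(nat \<Rightarrow> ('d::finite) idx set) \<Rightarrow> 'd sq \<Rightarrow> bool" where
  "on_nabla Nab a \<longleftrightarrow> (\<forall>j l. l \<notin> Nab j \<longrightarrow> a j l = 0)"

definition unit_seq :: "nat \<times> ('d::finite) idx \<Rightarrow> 'd sq" where
  "unit_seq jl = (\<lambda>j l. if (j, l) = jl then 1 else 0)"

definition sigma_n :: "(nat \<Rightarrow> ('d::finite) idx set) \<Rightarrow> real \<Rightarrow> ereal \<Rightarrow> ereal \<Rightarrow> nat \<Rightarrow> 'd sq \<Rightarrow> ereal" where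
  "sigma_n Nab s p q n u =
     (INF ic \<in> {(i, c). (\<forall>k<n. snd (i k) \<in> Nab (fst (i k)))}.
        bnorm Nab s p q (\<lambda>j l. u j l - (\<Sum>k<n. snd ic k * unit_seq (fst ic k) j l)))"

end

theory Submission
  imports Defs
begin

text \<open>
  Lower bound: fill a single level \<open>j\<close> with \<open>|\<nabla>\<^sub>j| \<approx> 2\<^sup>j\<^sup>d \<ge> 2n\<close> with one constant value,
  scaled to lie in the unit ball of \<open>b\<^sup>s\<^sup>+\<^sup>t\<^sub>p\<^sub>0\<^sub>,\<^sub>q\<^sub>0\<close>. An \<open>n\<close>-term approximation leaves at
  least half of that level untouched, so its error in \<open>b\<^sup>s\<^sub>p\<^sub>1\<^sub>,\<^sub>q\<^sub>1\<close> is of order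
  \<open>2\<^sup>-\<^sup>j\<^sup>t \<approx> n\<^sup>-\<^sup>t\<^sup>/\<^sup>d\<close>.

  Upper bound: choose \<open>j0\<close> with \<open>2\<^sup>j\<^sup>0\<^sup>d \<approx> n\<close> and keep all coefficients of the levels
  \<open>j < j0\<close>, which costs at most \<open>n/2\<close> terms. A sequence in the unit ball has level-\<open>j\<close> block
  norm \<open>\<alpha>\<^sub>j = 2\<^sup>-\<^sup>j\<^sup>(\<^sup>s\<^sup>+\<^sup>t\<^sup>+\<^sup>d\<^sup>/\<^sup>2\<^sup>-\<^sup>d\<^sup>/\<^sup>p\<^sup>0\<^sup>)\<close> at most in \<open>\<ell>\<^sup>p\<^sup>0\<close>. If \<open>p0 \<ge> p1\<close>, Hoelder's
  inequality on the \<open>|\<nabla>\<^sub>j|\<close> entries of a level turns this into a level error of order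
  \<open>2\<^sup>-\<^sup>j\<^sup>t\<close>. If \<open>p0 < p1\<close>, the remaining \<open>n/2\<close> terms are spread over the levels \<open>j \<ge> j0\<close> as
  geometrically decreasing budgets \<open>N\<^sub>j\<close>, each spent on the entries above the threshold
  \<open>\<alpha>\<^sub>j N\<^sub>j\<^sup>-\<^sup>1\<^sup>/\<^sup>p\<^sup>0\<close>; what is left has \<open>\<ell>\<^sup>p\<^sup>1\<close> norm at most \<open>\<alpha>\<^sub>j N\<^sub>j\<^sup>-\<^sup>(\<^sup>1\<^sup>/\<^sup>p\<^sup>0\<^sup>-\<^sup>1\<^sup>/\<^sup>p\<^sup>1\<^sup>)\<close>,
  and the budgets can be chosen to decay slowly enough that the level errors still decay
  geometrically, precisely because \<open>t > d (1/p0 - 1/p1)\<close>. In both cases the \<open>b\<^sup>s\<^sub>p\<^sub>1\<^sub>,\<^sub>q\<^sub>1\<close>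
  norm of a geometrically decaying sequence of level errors is comparable to its first term.
\<close>

section \<open>Block quasi-norms\<close>

lemma inv_exp_infinity [simp]: "inv_exp \<infinity> = 0"
  by (simp add: inv_exp_def)

lemma inv_exp_finite:
  assumes "0 < p" "p \<noteq> \<infinity>"
  shows "0 < real_of_ereal p" "inv_exp p = 1 / real_of_ereal p"
  using assms by (cases p; auto simp: inv_exp_def)+

lemma inv_exp_nonneg: "0 < p \<Longrightarrow> 0 \<le> inv_exp p"
  by (cases p) (auto simp: inv_exp_def)

lemma inv_exp_eq_0_iff: "0 < p \<Longrightarrow> inv_exp p = 0 \<longleftrightarrow> p = \<infinity>"
  by (cases p) (auto simp: inv_exp_def)

lemma sum_powr_root_le_card_powr:
  fixes f :: "'a \<Rightarrow> real"
  assumes "finite A" "0 < P1" "P1 \<le> P0"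
  shows "(\<Sum>x\<in>A. \<bar>f x\<bar> powr P1) powr (1/P1)
     \<le> real (card A) powr (1/P1 - 1/P0) * (\<Sum>x\<in>A. \<bar>f x\<bar> powr P0) powr (1/P0)"
proof -
  define B where "B = {x\<in>A. f x \<noteq> 0}"
  have B: "finite B" "B \<subseteq> A" using assms(1) by (auto simp: B_def)
  have on_B: "(\<Sum>x\<in>A. \<bar>f x\<bar> powr P) = (\<Sum>x\<in>B. \<bar>f x\<bar> powr P)" for P
    using B assms(1) by (intro sum.mono_neutral_right) (auto simp: B_def)
  show ?thesis
  proof (cases "B = {}")
    case True
    then show ?thesis by (simp add: on_B)
  next
    case False
    define m where "m = real (card B)"
    have m: "0 < m" "m \<le> real (card A)"
      using False B assms(1) by (auto simp: m_def card_gt_0_iff intro: card_mono)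
    define q where "q = P0 / P1"
    have q: "1 \<le> q" using assms by (simp add: q_def)
    define z where "z x = \<bar>f x\<bar> powr P1" for x
    have zq: "z x powr q = \<bar>f x\<bar> powr P0" for x
      using assms by (simp add: z_def powr_powr q_def)
    have "(\<Sum>x\<in>B. (1/m) *\<^sub>R z x) powr q \<le> (\<Sum>x\<in>B. (1/m) * z x powr q)"
      using B False m by (intro convex_on_sum[OF _ _ powr_convex[OF q]]) (auto simp: m_def z_def B_def)
    then have "((\<Sum>x\<in>B. z x) / m) powr q \<le> (\<Sum>x\<in>B. \<bar>f x\<bar> powr P0) / m"
      by (simp add: zq sum_divide_distrib[symmetric] sum_distrib_left[symmetric] field_simps)
    then have "(\<Sum>x\<in>B. z x) powr q / m powr q \<le> (\<Sum>x\<in>B. \<bar>f x\<bar> powr P0) / m"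
      using m by (simp add: powr_divide z_def sum_nonneg)
    then have "(\<Sum>x\<in>B. z x) powr q \<le> m powr (q - 1) * (\<Sum>x\<in>B. \<bar>f x\<bar> powr P0)"
      using m by (simp add: powr_diff field_simps)
    then have "((\<Sum>x\<in>B. z x) powr q) powr (1/P0)
        \<le> (m powr (q - 1) * (\<Sum>x\<in>B. \<bar>f x\<bar> powr P0)) powr (1/P0)"
      using assms by (intro powr_mono2) (auto simp: z_def intro: sum_nonneg)
    also have "\<dots> = m powr (1/P1 - 1/P0) * (\<Sum>x\<in>B. \<bar>f x\<bar> powr P0) powr (1/P0)"
      using assms by (simp add: powr_mult powr_powr q_def diff_divide_distrib)
    also have "\<dots> \<le> real (card A) powr (1/P1 - 1/P0) * (\<Sum>x\<in>B. \<bar>f x\<bar> powr P0) powr (1/P0)"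
      using m assms by (intro mult_right_mono powr_mono2) (auto simp: field_simps)
    finally show ?thesis
      using assms by (simp add: on_B z_def powr_powr q_def)
  qed
qed

lemma block_norm_cong:
  "(\<And>x. x \<in> A \<Longrightarrow> f x = g x) \<Longrightarrow> block_norm p A f = block_norm p A g"
  unfolding block_norm_def by (auto intro!: sum.cong image_cong)

lemma block_norm_nonneg:
  assumes "finite A"
  shows "0 \<le> block_norm p A f"
proof (cases "p = \<infinity> \<and> A \<noteq> {}")
  case True
  then obtain x where "x \<in> A" by auto
  then have "\<bar>f x\<bar> \<le> Max ((\<lambda>x. \<bar>f x\<bar>) ` A)" using assms by (intro Max_ge) auto
  then show ?thesis using True by (simp add: block_norm_def)
qed (auto simp: block_norm_def)

lemma block_norm_zero:
  assumes "\<And>x. x \<in> A \<Longrightarrow> f x = 0"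
  shows "block_norm p A f = 0"
proof -
  have "block_norm p A f = block_norm p A (\<lambda>_. 0)" using assms by (intro block_norm_cong) auto
  also have "\<dots> = 0" by (cases "A = {}") (auto simp: block_norm_def image_constant_conv)
  finally show ?thesis .
qed

lemma block_norm_mono:
  assumes "finite A" "B \<subseteq> A" "\<And>x. x \<in> B \<Longrightarrow> \<bar>g x\<bar> \<le> \<bar>f x\<bar>" "0 < p"
  shows "block_norm p B g \<le> block_norm p A f"
proof (cases "p = \<infinity>")
  case True
  show ?thesis
  proof (cases "B = {}")
    case True
    then have "block_norm p B g = 0" by (simp add: block_norm_def)
    then show ?thesis using block_norm_nonneg[OF assms(1), of p f] by linarith
  next
    case False
    have "\<bar>g x\<bar> \<le> Max ((\<lambda>x. \<bar>f x\<bar>) ` A)" if "x \<in> B" for x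
      using that assms by (meson Max_ge finite_imageI image_eqI order_trans subsetD)
    then have "Max ((\<lambda>x. \<bar>g x\<bar>) ` B) \<le> Max ((\<lambda>x. \<bar>f x\<bar>) ` A)"
      using False finite_subset[OF assms(2,1)] by (subst Max_le_iff) auto
    then show ?thesis using True False assms(2) by (auto simp: block_norm_def)
  qed
next
  case False
  define P where "P = real_of_ereal p"
  have P: "0 < P" using inv_exp_finite[OF assms(4) False] P_def by auto
  have "(\<Sum>x\<in>B. \<bar>g x\<bar> powr P) \<le> (\<Sum>x\<in>B. \<bar>f x\<bar> powr P)"
    using assms P by (intro sum_mono powr_mono2) auto
  also have "\<dots> \<le> (\<Sum>x\<in>A. \<bar>f x\<bar> powr P)"
    using assms by (intro sum_mono2) auto
  finally show ?thesis
    using False P by (simp add: block_norm_def P_def powr_mono2 sum_nonneg)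
qed

lemma block_norm_const:
  assumes "finite A" "A \<noteq> {}" "0 \<le> g" "0 < p"
  shows "block_norm p A (\<lambda>_. g) = real (card A) powr inv_exp p * g"
proof (cases "p = \<infinity>")
  case True
  then show ?thesis using assms by (simp add: block_norm_def image_constant_conv)
next
  case False
  define P where "P = real_of_ereal p"
  have P: "0 < P" "inv_exp p = 1/P" using inv_exp_finite[OF assms(4) False] P_def by auto
  have "block_norm p A (\<lambda>_. g) = (real (card A) * g powr P) powr (1/P)"
    using False assms by (simp add: block_norm_def P_def)
  also have "\<dots> = real (card A) powr inv_exp p * g"
    using P assms by (simp add: powr_mult powr_powr)
  finally show ?thesis .
qed

lemma block_norm_le_card_powr:
  assumes "finite A" "0 < p0" "0 < p1" "inv_exp p0 \<le> inv_exp p1"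
  shows "block_norm p1 A f \<le> real (card A) powr (inv_exp p1 - inv_exp p0) * block_norm p0 A f"
proof (cases "p1 = \<infinity>")
  case True
  then have "p0 = \<infinity>"
    using assms inv_exp_nonneg[of p0] inv_exp_eq_0_iff[of p0] by simp
  then show ?thesis using True assms(1) by (simp add: block_norm_def card_gt_0_iff)
next
  case False
  define P1 where "P1 = real_of_ereal p1"
  have P1: "0 < P1" "inv_exp p1 = 1/P1" using inv_exp_finite[OF assms(3) False] P1_def by auto
  show ?thesis
  proof (cases "p0 = \<infinity>")
    case True
    show ?thesis
    proof (cases "A = {}")
      case False
      define M where "M = Max ((\<lambda>x. \<bar>f x\<bar>) ` A)"
      have M: "\<bar>f x\<bar> \<le> M" if "x \<in> A" for x using that assms unfolding M_def by (intro Max_ge) auto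
      have M0: "0 \<le> M" using M False by (meson abs_ge_zero all_not_in_conv order_trans)
      have "(\<Sum>x\<in>A. \<bar>f x\<bar> powr P1) powr (1/P1) \<le> (\<Sum>x\<in>A. M powr P1) powr (1/P1)"
        using M P1 by (intro powr_mono2 sum_mono) (auto intro: sum_nonneg)
      also have "\<dots> = real (card A) powr (1/P1) * M"
        using P1 M0 by (simp add: powr_mult powr_powr)
      finally show ?thesis using True \<open>p1 \<noteq> \<infinity>\<close> P1 False by (simp add: block_norm_def P1_def M_def)
    qed (simp add: block_norm_def)
  next
    case False
    define P0 where "P0 = real_of_ereal p0"
    have P0: "0 < P0" "inv_exp p0 = 1/P0" using inv_exp_finite[OF assms(2) False] P0_def by auto
    have "P1 \<le> P0" using assms(4) P0 P1 by (simp add: divide_simps)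
    from sum_powr_root_le_card_powr[OF assms(1) P1(1) this, of f]
    show ?thesis using False \<open>p1 \<noteq> \<infinity>\<close> P0 P1 by (simp add: block_norm_def P0_def P1_def)
  qed
qed

lemma sum_powr_le_of_block_norm_le:
  assumes "0 < p" "p \<noteq> \<infinity>" "block_norm p A f \<le> \<alpha>"
  shows "(\<Sum>x\<in>A. \<bar>f x\<bar> powr real_of_ereal p) \<le> \<alpha> powr real_of_ereal p"
proof -
  define P where "P = real_of_ereal p"
  define S where "S = (\<Sum>x\<in>A. \<bar>f x\<bar> powr P)"
  have P: "0 < P" using inv_exp_finite[OF assms(1,2)] by (simp add: P_def)
  have S: "0 \<le> S" unfolding S_def by (intro sum_nonneg) auto
  have "S powr (1/P) \<le> \<alpha>" using assms(2,3) by (simp add: block_norm_def S_def P_def)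
  then have "(S powr (1/P)) powr P \<le> \<alpha> powr P" using P by (intro powr_mono2) auto
  then show ?thesis using P S by (simp add: powr_powr S_def P_def)
qed

lemma card_large_entries_le:
  assumes "0 < p" "p \<noteq> \<infinity>" "finite A" "block_norm p A f \<le> \<alpha>" "0 < \<alpha>" "0 < N"
  shows "real (card {x\<in>A. \<alpha> * N powr (- inv_exp p) < \<bar>f x\<bar>}) \<le> N"
proof -
  define P where "P = real_of_ereal p"
  have P: "0 < P" "inv_exp p = 1/P" using inv_exp_finite[OF assms(1,2)] P_def by auto
  define \<tau> where "\<tau> = \<alpha> * N powr (- inv_exp p)"
  define T where "T = {x\<in>A. \<tau> < \<bar>f x\<bar>}"
  have \<tau>: "0 < \<tau>" using assms by (simp add: \<tau>_def)
  have "\<tau> powr P = \<alpha> powr P * N powr (- (1/P) * P)"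
    using P by (simp add: \<tau>_def powr_mult powr_powr del: mult_minus_left)
  then have \<tau>P: "\<tau> powr P = \<alpha> powr P / N"
    using P assms(6) by (simp add: powr_minus divide_inverse)
  have "real (card T) * \<tau> powr P = (\<Sum>x\<in>T. \<tau> powr P)" by simp
  also have "\<dots> \<le> (\<Sum>x\<in>T. \<bar>f x\<bar> powr P)"
    using P \<tau> by (intro sum_mono powr_mono2) (auto simp: T_def)
  also have "\<dots> \<le> (\<Sum>x\<in>A. \<bar>f x\<bar> powr P)"
    using assms(3) by (intro sum_mono2) (auto simp: T_def)
  also have "\<dots> \<le> N * \<tau> powr P"
    using sum_powr_le_of_block_norm_le[OF assms(1,2,4)] \<tau>P assms(6) by (simp add: P_def)
  finally have "real (card T) * \<tau> powr P \<le> N * \<tau> powr P" .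
  then have "real (card T) \<le> N" using \<tau> by (simp add: mult_le_cancel_right)
  then show ?thesis by (simp add: T_def \<tau>_def)
qed

lemma block_norm_small_entries_le:
  assumes "0 < p0" "p0 \<noteq> \<infinity>" "0 < p1" "inv_exp p1 \<le> inv_exp p0"
    and "finite A" "block_norm p0 A f \<le> \<alpha>" "0 < \<alpha>" "0 < N"
  shows "block_norm p1 A (\<lambda>x. if \<alpha> * N powr (- inv_exp p0) < \<bar>f x\<bar> then 0 else f x)
    \<le> \<alpha> * N powr (inv_exp p1 - inv_exp p0)"
proof -
  define \<tau> where "\<tau> = \<alpha> * N powr (- inv_exp p0)"
  define g where "g x = (if \<tau> < \<bar>f x\<bar> then 0 else f x)" for x
  have \<tau>: "0 < \<tau>" using assms by (simp add: \<tau>_def)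
  have g: "\<bar>g x\<bar> \<le> \<tau>" for x using \<tau> by (auto simp: g_def)
  have "block_norm p1 A g \<le> \<alpha> * N powr (inv_exp p1 - inv_exp p0)"
  proof (cases "p1 = \<infinity>")
    case True
    then have "Max ((\<lambda>x. \<bar>g x\<bar>) ` A) \<le> \<tau>" if "A \<noteq> {}"
      using that assms(5) g by (subst Max_le_iff) auto
    then show ?thesis using True assms by (simp add: block_norm_def \<tau>_def)
  next
    case False
    define P0 where "P0 = real_of_ereal p0"
    define P1 where "P1 = real_of_ereal p1"
    have P0: "0 < P0" "inv_exp p0 = 1/P0" using inv_exp_finite[OF assms(1,2)] P0_def by auto
    have P1: "0 < P1" "inv_exp p1 = 1/P1" using inv_exp_finite[OF assms(3) False] P1_def by auto
    have "P0 \<le> P1" using assms(4) P0 P1 by (simp add: divide_simps)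
    have "\<bar>g x\<bar> powr P1 \<le> \<tau> powr (P1 - P0) * \<bar>f x\<bar> powr P0" for x
    proof (cases "\<tau> < \<bar>f x\<bar>")
      case False
      then have "\<bar>f x\<bar> powr (P1 - P0) \<le> \<tau> powr (P1 - P0)"
        using \<open>P0 \<le> P1\<close> by (intro powr_mono2) auto
      then have "\<bar>f x\<bar> powr (P1 - P0) * \<bar>f x\<bar> powr P0 \<le> \<tau> powr (P1 - P0) * \<bar>f x\<bar> powr P0"
        by (intro mult_right_mono) auto
      then show ?thesis using False by (simp add: g_def flip: powr_add)
    qed (use \<tau> in \<open>simp add: g_def\<close>)
    then have "(\<Sum>x\<in>A. \<bar>g x\<bar> powr P1) \<le> \<tau> powr (P1 - P0) * (\<Sum>x\<in>A. \<bar>f x\<bar> powr P0)"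
      by (simp add: sum_distrib_left sum_mono)
    also have "\<dots> \<le> \<tau> powr (P1 - P0) * \<alpha> powr P0"
      using sum_powr_le_of_block_norm_le[OF assms(1,2,6)] by (intro mult_left_mono) (auto simp: P0_def)
    finally have "(\<Sum>x\<in>A. \<bar>g x\<bar> powr P1) powr (1/P1) \<le> (\<tau> powr (P1 - P0) * \<alpha> powr P0) powr (1/P1)"
      using P1 by (intro powr_mono2) (auto intro: sum_nonneg)
    also have "\<dots> = \<alpha> powr ((P1 - P0)/P1 + P0/P1) * N powr (- inv_exp p0 * ((P1 - P0)/P1))"
      using assms(7,8) by (simp add: \<tau>_def powr_mult powr_powr powr_add)
    also have "(P1 - P0)/P1 + P0/P1 = 1" using P1 by (simp add: field_simps)
    also have "- inv_exp p0 * ((P1 - P0)/P1) = inv_exp p1 - inv_exp p0"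
      unfolding P0(2) P1(2) using P0(1) P1(1) by (simp add: field_simps)
    finally show ?thesis using False assms(7) by (simp add: block_norm_def P1_def)
  qed
  then show ?thesis unfolding g_def[abs_def] \<tau>_def .
qed

section \<open>Level norms\<close>

lemma powr_geometric_tail_bound:
  fixes x :: "nat \<Rightarrow> real"
  assumes "0 < Q" "0 \<le> K" "0 < \<theta>" "\<theta> < 1"
    and "\<And>j. 0 \<le> x j" "\<And>j. x j \<le> (if j < j0 then 0 else K * \<theta> ^ (j - j0))"
  shows "summable (\<lambda>j. x j powr Q)"
    and "(\<Sum>j. x j powr Q) powr (1/Q) \<le> K * (1 - \<theta> powr Q) powr (-1/Q)"
proof -
  define \<rho> where "\<rho> = \<theta> powr Q"
  have \<rho>: "0 < \<rho>" "\<rho> < 1"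
    using assms by (auto simp: \<rho>_def intro: powr_less_mono2[of Q \<theta> 1, simplified])
  define b where "b j = (if j < j0 then 0 else K powr Q * \<rho> ^ (j - j0))" for j
  have "(\<lambda>k. K powr Q * \<rho> ^ k) sums (K powr Q * (1 / (1 - \<rho>)))"
    using \<rho> by (intro sums_mult geometric_sums) auto
  then have "(\<lambda>k. b (k + j0)) sums (K powr Q * (1 / (1 - \<rho>)))"
    by (simp add: b_def)
  then have b: "b sums (K powr Q / (1 - \<rho>))"
    by (subst (asm) sums_zero_iff_shift) (auto simp: b_def)
  have xb: "x j powr Q \<le> b j" for j
  proof (cases "j < j0")
    case True
    then show ?thesis using assms(5,6)[of j] by (simp add: b_def)
  next
    case False
    have "x j powr Q \<le> (K * \<theta> ^ (j - j0)) powr Q"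
      using False assms(1,5) assms(6)[of j] by (intro powr_mono2) auto
    also have "\<dots> = K powr Q * (\<theta> powr real (j - j0)) powr Q"
      using assms(3) by (simp add: powr_mult powr_realpow)
    also have "(\<theta> powr real (j - j0)) powr Q = \<rho> ^ (j - j0)"
      using assms(3) by (simp add: \<rho>_def powr_powr powr_power)
    also have "K powr Q * \<rho> ^ (j - j0) = b j"
      using False by (simp add: b_def)
    finally show ?thesis .
  qed
  show sx: "summable (\<lambda>j. x j powr Q)"
    using xb by (intro summable_comparison_test'[OF sums_summable[OF b]]) auto
  have "(\<Sum>j. x j powr Q) \<le> K powr Q / (1 - \<rho>)"
    using suminf_le[OF xb sx sums_summable[OF b]] b by (simp add: sums_iff)
  then have "(\<Sum>j. x j powr Q) powr (1/Q) \<le> (K powr Q / (1 - \<rho>)) powr (1/Q)"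
    using assms(1) sx by (intro powr_mono2 suminf_nonneg) auto
  also have "\<dots> = K * (1 - \<theta> powr Q) powr (-1/Q)"
    using assms(1,2) \<rho> by (simp add: \<rho>_def powr_divide powr_powr powr_minus_divide)
  finally show "(\<Sum>j. x j powr Q) powr (1/Q) \<le> K * (1 - \<theta> powr Q) powr (-1/Q)" .
qed

definition level_norm :: "(nat \<Rightarrow> ('d::finite) idx set) \<Rightarrow> real \<Rightarrow> ereal \<Rightarrow> 'd sq \<Rightarrow> nat \<Rightarrow> real" where
  "level_norm Nab s p a j =
     2 powr (real j * (s + real CARD('d) * (1/2 - inv_exp p))) * block_norm p (Nab j) (a j)"

lemma bnorm_level_norm:
  "bnorm Nab s p q a =
     (if q = \<infinity> then (SUP j. ereal (level_norm Nab s p a j))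
      else if summable (\<lambda>j. level_norm Nab s p a j powr real_of_ereal q)
      then ereal ((\<Sum>j. level_norm Nab s p a j powr real_of_ereal q) powr (1 / real_of_ereal q))
      else \<infinity>)"
  unfolding bnorm_def level_norm_def Let_def by simp

lemma level_norm_nonneg: "finite (Nab j) \<Longrightarrow> 0 \<le> level_norm Nab s p a j"
  unfolding level_norm_def by (intro mult_nonneg_nonneg block_norm_nonneg) auto

lemma level_norm_cong:
  "(\<And>l. l \<in> Nab j \<Longrightarrow> a j l = b j l) \<Longrightarrow> level_norm Nab s p a j = level_norm Nab s p b j"
  unfolding level_norm_def by (simp cong: block_norm_cong)

lemma level_norm_zero: "(\<And>l. l \<in> Nab j \<Longrightarrow> a j l = 0) \<Longrightarrow> level_norm Nab s p a j = 0"
  by (simp add: level_norm_def block_norm_zero)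

lemma level_norm_le_bnorm:
  assumes "0 < q" "\<And>j. finite (Nab j)"
  shows "ereal (level_norm Nab s p a j) \<le> bnorm Nab s p q a"
proof (cases "q = \<infinity>")
  case True
  then show ?thesis by (auto simp: bnorm_level_norm intro: SUP_upper)
next
  case False
  define Q where "Q = real_of_ereal q"
  define x where "x i = level_norm Nab s p a i" for i
  have Q: "0 < Q" using inv_exp_finite[OF assms(1) False] Q_def by auto
  have x: "0 \<le> x i" for i using level_norm_nonneg[OF assms(2)] by (simp add: x_def)
  show ?thesis
  proof (cases "summable (\<lambda>i. x i powr Q)")
    case True
    have "x j powr Q \<le> (\<Sum>i. x i powr Q)"
      using sum_le_suminf[OF True, of "{j}"] by simp
    then have "(x j powr Q) powr (1/Q) \<le> (\<Sum>i. x i powr Q) powr (1/Q)"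
      using Q by (intro powr_mono2) auto
    then have "x j \<le> (\<Sum>i. x i powr Q) powr (1/Q)"
      using Q x[of j] by (simp add: powr_powr)
    then show ?thesis using True False by (simp add: bnorm_level_norm Q_def x_def)
  next
    case nonsummable: False
    then show ?thesis using False by (simp add: bnorm_level_norm Q_def x_def)
  qed
qed

lemma bnorm_single_level:
  assumes "0 < q" "\<And>j. finite (Nab j)" "\<And>j' l. j' \<noteq> j \<Longrightarrow> l \<in> Nab j' \<Longrightarrow> a j' l = 0"
  shows "bnorm Nab s p q a = ereal (level_norm Nab s p a j)"
proof -
  have other: "level_norm Nab s p a j' = 0" if "j' \<noteq> j" for j'
    using assms(3) that by (intro level_norm_zero) auto
  have nonneg: "0 \<le> level_norm Nab s p a j" by (rule level_norm_nonneg[OF assms(2)])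
  show ?thesis
  proof (cases "q = \<infinity>")
    case True
    have "ereal (level_norm Nab s p a j') \<le> ereal (level_norm Nab s p a j)" for j'
      by (cases "j' = j") (auto simp: other nonneg)
    then have "(SUP j'. ereal (level_norm Nab s p a j')) = ereal (level_norm Nab s p a j)"
      by (intro antisym SUP_least) (auto intro: SUP_upper)
    then show ?thesis using True by (simp add: bnorm_level_norm)
  next
    case False
    define Q where "Q = real_of_ereal q"
    have Q: "0 < Q" using inv_exp_finite[OF assms(1) False] Q_def by auto
    have "(\<lambda>j'. level_norm Nab s p a j' powr Q) = (\<lambda>j'. if j' = j then level_norm Nab s p a j powr Q else 0)"
      by (auto simp: other)
    then have "(\<lambda>j'. level_norm Nab s p a j' powr Q) sums (level_norm Nab s p a j powr Q)"
      using sums_single[of j "\<lambda>_. level_norm Nab s p a j powr Q"] by simp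
    then show ?thesis
      using False Q nonneg by (simp add: bnorm_level_norm sums_iff powr_powr flip: Q_def)
  qed
qed

lemma block_norm_le_of_bnorm_le_1:
  fixes Nab :: "nat \<Rightarrow> ('d::finite) idx set"
  assumes "0 < q" "\<And>j. finite (Nab j)" "bnorm Nab s p q a \<le> 1"
  shows "block_norm p (Nab j) (a j) \<le> 2 powr (- real j * (s + real CARD('d) * (1/2 - inv_exp p)))"
proof -
  define W where "W = 2 powr (real j * (s + real CARD('d) * (1/2 - inv_exp p)))"
  have "ereal (level_norm Nab s p a j) \<le> 1"
    using level_norm_le_bnorm[OF assms(1,2)] assms(3) by (rule order_trans)
  then have "W * block_norm p (Nab j) (a j) \<le> 1"
    by (simp add: level_norm_def W_def one_ereal_def)
  moreover have "0 < W" by (simp add: W_def)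
  ultimately have "block_norm p (Nab j) (a j) \<le> 1 / W"
    by (simp add: pos_le_divide_eq mult.commute)
  then show ?thesis by (simp add: W_def powr_minus_divide)
qed

text \<open>\<open>(1 - \<theta>\<^sup>q)\<^sup>-\<^sup>1\<^sup>/\<^sup>q\<close> is the \<open>\<ell>\<^sup>q\<close> norm of the geometric sequence \<open>(\<theta>\<^sup>k)\<^sub>k\<close>.\<close>
definition geometric_lq_norm :: "ereal \<Rightarrow> real \<Rightarrow> real" where
  "geometric_lq_norm q \<theta> =
     (if q = \<infinity> then 1 else (1 - \<theta> powr real_of_ereal q) powr (-1 / real_of_ereal q))"

lemma geometric_lq_norm_pos:
  assumes "0 < q" "0 < \<theta>" "\<theta> < 1"
  shows "0 < geometric_lq_norm q \<theta>"
proof (cases "q = \<infinity>")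
  case False
  have "\<theta> powr real_of_ereal q < 1 powr real_of_ereal q"
    using assms inv_exp_finite[OF assms(1) False] by (intro powr_less_mono2) auto
  then show ?thesis using False by (simp add: geometric_lq_norm_def)
qed (simp add: geometric_lq_norm_def)

lemma bnorm_le_geometric:
  assumes "0 < q" "\<And>j. finite (Nab j)" "0 \<le> K" "0 < \<theta>" "\<theta> < 1"
    and "\<And>j. level_norm Nab s p a j \<le> (if j < j0 then 0 else K * \<theta> ^ (j - j0))"
  shows "bnorm Nab s p q a \<le> ereal (K * geometric_lq_norm q \<theta>)"
proof (cases "q = \<infinity>")
  case True
  have "level_norm Nab s p a j \<le> K" for j
  proof -
    have "K * \<theta> ^ (j - j0) \<le> K" using assms(3-5) by (simp add: mult_left_le power_le_one)
    then show ?thesis using assms(3) assms(6)[of j] by (auto split: if_splits)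
  qed
  then show ?thesis using True by (simp add: bnorm_level_norm geometric_lq_norm_def SUP_le_iff)
next
  case False
  define Q where "Q = real_of_ereal q"
  have Q: "0 < Q" using inv_exp_finite[OF assms(1) False] Q_def by auto
  note bound = powr_geometric_tail_bound[OF Q assms(3-5) level_norm_nonneg[OF assms(2)] assms(6)]
  show ?thesis using bound False by (simp add: bnorm_level_norm geometric_lq_norm_def Q_def)
qed

section \<open>Best \<open>n\<close>-term approximation\<close>

lemma sigma_n_le_bnorm_delete:
  assumes "finite S" "card S \<le> n" "S \<subseteq> Sigma UNIV Nab" "l1 \<in> Nab j1"
  shows "sigma_n Nab s p q n u \<le> bnorm Nab s p q (\<lambda>j l. if (j, l) \<in> S then 0 else u j l)"
proof -
  obtain h where h: "bij_betw h {..<card S} S"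
    using bij_betw_from_nat_into_finite[OF assms(1)] by blast
  \<comment> \<open>indices beyond \<open>card S\<close> are padded with the dummy term \<open>0 \<cdot> e\<^sub>j\<^sub>1\<^sub>,\<^sub>l\<^sub>1\<close>\<close>
  define i where "i k = (if k < card S then h k else (j1, l1))" for k
  define c where "c k = (if k < card S then u (fst (h k)) (snd (h k)) else 0)" for k
  have hS: "h k \<in> S" if "k < card S" for k using h that by (auto simp: bij_betw_def)
  have "snd (i k) \<in> Nab (fst (i k))" for k
    using hS[of k] assms(3,4) by (auto simp: i_def)
  then have admissible: "(i, c) \<in> {(i, c). \<forall>k<n. snd (i k) \<in> Nab (fst (i k))}"
    by simp
  have "(\<Sum>k<n. c k * unit_seq (i k) j l) = (if (j, l) \<in> S then u j l else 0)" for j l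
  proof -
    have "(\<Sum>k<n. c k * unit_seq (i k) j l) = (\<Sum>k<card S. c k * unit_seq (i k) j l)"
      using assms(2) by (intro sum.mono_neutral_right) (auto simp: c_def)
    also have "\<dots> = (\<Sum>k<card S. (\<lambda>x. u (fst x) (snd x) * unit_seq x j l) (h k))"
      by (intro sum.cong) (auto simp: c_def i_def)
    also have "\<dots> = (\<Sum>x\<in>S. u (fst x) (snd x) * unit_seq x j l)"
      using sum.reindex_bij_betw[OF h] by simp
    also have "\<dots> = (\<Sum>x\<in>S. if x = (j, l) then u j l else 0)"
      by (intro sum.cong) (auto simp: unit_seq_def)
    finally show ?thesis using assms(1) by (simp add: sum.delta')
  qed
  then have "(\<lambda>j l. u j l - (\<Sum>k<n. snd (i, c) k * unit_seq (fst (i, c) k) j l))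
      = (\<lambda>j l. if (j, l) \<in> S then 0 else u j l)"
    by (auto simp: fun_eq_iff)
  moreover have "sigma_n Nab s p q n u
      \<le> bnorm Nab s p q (\<lambda>j l. u j l - (\<Sum>k<n. snd (i, c) k * unit_seq (fst (i, c) k) j l))"
    unfolding sigma_n_def by (rule INF_lower[OF admissible])
  ultimately show ?thesis by simp
qed

lemma sigma_n_le_geometric:
  assumes "0 < q" "\<And>j. finite (Nab j)" "l1 \<in> Nab j1"
    and "finite S" "card S \<le> n" "S \<subseteq> Sigma UNIV Nab" "\<And>j l. j < j0 \<Longrightarrow> l \<in> Nab j \<Longrightarrow> (j, l) \<in> S"
    and "0 \<le> K" "0 < \<theta>" "\<theta> < 1"
    and "\<And>j. j0 \<le> j \<Longrightarrow>
      level_norm Nab s p (\<lambda>j l. if (j, l) \<in> S then 0 else a j l) j \<le> K * \<theta> ^ (j - j0)"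
  shows "sigma_n Nab s p q n a \<le> ereal (K * geometric_lq_norm q \<theta>)"
proof -
  let ?u = "\<lambda>j l. if (j, l) \<in> S then 0 else a j l"
  have "level_norm Nab s p ?u j \<le> (if j < j0 then 0 else K * \<theta> ^ (j - j0))" for j
    using assms(7,11) by (auto intro: level_norm_zero[THEN eq_refl])
  then have "bnorm Nab s p q ?u \<le> ereal (K * geometric_lq_norm q \<theta>)"
    using bnorm_le_geometric[where Nab = Nab, OF assms(1,2,8-10)] by blast
  then show ?thesis using sigma_n_le_bnorm_delete[OF assms(4-6,3)] by (rule order_trans[rotated])
qed

lemma card_le_card_missed_add:
  assumes "finite A"
  shows "card A \<le> card {l\<in>A. (j, l) \<notin> i ` {..<n}} + n"
proof -
  let ?hit = "{l. (j, l) \<in> i ` {..<n}}"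
  have "card ?hit \<le> card (i ` {..<n})"
    by (rule card_inj_on_le[where f = "Pair j"]) (auto simp: inj_on_def)
  also have "\<dots> \<le> n" using card_image_le[of "{..<n}" i] by simp
  finally have "card ?hit \<le> n" .
  have "finite ?hit"
    using finite_vimageI[of "i ` {..<n}" "Pair j"] by (simp add: vimage_def inj_on_def)
  have "card A \<le> card ({l\<in>A. (j, l) \<notin> i ` {..<n}} \<union> (A \<inter> ?hit))"
    using assms by (intro card_mono) auto
  also have "\<dots> \<le> card {l\<in>A. (j, l) \<notin> i ` {..<n}} + card (A \<inter> ?hit)" by (rule card_Un_le)
  also have "card (A \<inter> ?hit) \<le> card ?hit"
    using \<open>finite ?hit\<close> by (intro card_mono) auto
  finally show ?thesis using \<open>card ?hit \<le> n\<close> by linarith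
qed

lemma sigma_n_ge_constant_level:
  fixes Nab :: "nat \<Rightarrow> ('d::finite) idx set"
  assumes "0 < q" "0 < p" "\<And>j. finite (Nab j)"
    and "\<And>l. l \<in> Nab j \<Longrightarrow> a j l = \<gamma>" "0 \<le> \<gamma>" "2 * n \<le> card (Nab j)" "1 \<le> n"
  shows "ereal (2 powr (real j * (s + real CARD('d) * (1/2 - inv_exp p)))
      * (real (card (Nab j)) / 2) powr inv_exp p * \<gamma>) \<le> sigma_n Nab s p q n a"
  unfolding sigma_n_def
proof (rule INF_greatest, clarify)
  fix i :: "nat \<Rightarrow> nat \<times> 'd idx" and c :: "nat \<Rightarrow> real"
  define r where "r = (\<lambda>j l. a j l - (\<Sum>k<n. c k * unit_seq (i k) j l))"
  define T where "T = {l \<in> Nab j. (j, l) \<notin> i ` {..<n}}"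
  define W where "W = 2 powr (real j * (s + real CARD('d) * (1/2 - inv_exp p)))"
  have T: "finite T" "T \<subseteq> Nab j" using assms(3) by (auto simp: T_def)
  have rT: "r j l = \<gamma>" if "l \<in> T" for l
    using that assms(4) by (auto simp: r_def T_def unit_seq_def intro!: sum.neutral)
  have "card (Nab j) \<le> card T + n"
    unfolding T_def by (rule card_le_card_missed_add[OF assms(3)])
  then have card_T: "real (card (Nab j)) / 2 \<le> real (card T)" "T \<noteq> {}"
    using assms(6,7) by auto
  have "W * (real (card (Nab j)) / 2) powr inv_exp p * \<gamma> \<le> W * (real (card T) powr inv_exp p * \<gamma>)"
    using card_T assms(5) inv_exp_nonneg[OF assms(2)]
    by (simp add: W_def mult.assoc mult_left_mono mult_right_mono powr_mono2)
  also have "real (card T) powr inv_exp p * \<gamma> = block_norm p T (\<lambda>_. \<gamma>)"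
    using block_norm_const[OF T(1) card_T(2) assms(5,2)] by simp
  also have "block_norm p T (\<lambda>_. \<gamma>) \<le> block_norm p (Nab j) (r j)"
    using T rT assms(2,3) by (intro block_norm_mono) auto
  finally have "W * (real (card (Nab j)) / 2) powr inv_exp p * \<gamma> \<le> level_norm Nab s p r j"
    by (simp add: level_norm_def W_def mult_left_mono)
  also have "ereal (level_norm Nab s p r j) \<le> bnorm Nab s p q r"
    by (rule level_norm_le_bnorm[OF assms(1,3)])
  finally show "ereal (W * (real (card (Nab j)) / 2) powr inv_exp p * \<gamma>)
      \<le> bnorm Nab s p q (\<lambda>j l. a j l - (\<Sum>k<n. snd (i, c) k * unit_seq (fst (i, c) k) j l))"
    by (simp add: r_def)
qed

section \<open>Levels of an admissible index family\<close>

lemma admissible_nabla_card_bounds: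
  fixes Nab :: "nat \<Rightarrow> ('d::finite) idx set"
  assumes "admissible_nabla Nab"
  obtains C1 C2 J where "0 < C1" "0 < C2" "\<And>j. finite (Nab j)"
    "\<And>j. J \<le> j \<Longrightarrow> C1 * 2 powr (real j * real CARD('d)) \<le> real (card (Nab j))"
    "\<And>j. real (card (Nab j)) \<le> C2 * 2 powr (real j * real CARD('d))"
proof -
  obtain C1 C2 J where fin: "\<And>j. finite (Nab j)" and C: "0 < C1" "C1 \<le> C2"
    and bounds: "\<And>j. J \<le> j \<Longrightarrow> C1 \<le> 2 powr (- real j * CARD('d)) * real (card (Nab j))
        \<and> 2 powr (- real j * CARD('d)) * real (card (Nab j)) \<le> C2"
    using assms unfolding admissible_nabla_def by blast
  define E where "E j = 2 powr (real j * real CARD('d))" for j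
  have E: "0 < E j" "1 \<le> E j" for j by (simp_all add: E_def ge_one_powr_ge_zero)
  have scaled: "2 powr (- real j * CARD('d)) * x = x / E j" for j x
    by (simp add: E_def powr_minus divide_inverse)
  define C2' where "C2' = C2 + (\<Sum>j<J. real (card (Nab j)))"
  have C2': "C2 \<le> C2'" "(\<Sum>j<J. real (card (Nab j))) \<le> C2'"
    using C by (auto simp: C2'_def intro!: sum_nonneg)
  show ?thesis
  proof (rule that[of C1 C2' J])
    show "0 < C1" "0 < C2'" "finite (Nab j)" for j using C C2' fin by auto
    show "C1 * 2 powr (real j * real CARD('d)) \<le> real (card (Nab j))" if "J \<le> j" for j
      using bounds[OF that] E[of j] unfolding scaled by (simp add: pos_le_divide_eq E_def)
    show "real (card (Nab j)) \<le> C2' * 2 powr (real j * real CARD('d))" for j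
    proof (cases "J \<le> j")
      case True
      then have "real (card (Nab j)) \<le> C2 * E j"
        using bounds[OF True] E[of j] unfolding scaled by (simp add: pos_divide_le_eq)
      also have "\<dots> \<le> C2' * E j" using C2' E[of j] by (intro mult_right_mono) auto
      finally show ?thesis by (simp add: E_def)
    next
      case False
      then have "real (card (Nab j)) \<le> (\<Sum>j<J. real (card (Nab j)))"
        by (intro member_le_sum) auto
      also have "\<dots> \<le> C2'" by (rule C2'(2))
      also have "\<dots> \<le> C2' * E j" using E(2)[of j] C C2'(1) by (simp add: mult_le_cancel_left1)
      finally show ?thesis by (simp add: E_def)
    qed
  qed
qed

lemma exists_level_between:
  fixes d x :: real
  assumes "0 < d"
  obtains j where "J \<le> j" "x \<le> 2 powr (real j * d)" "j = J \<or> 2 powr (real j * d) \<le> 2 powr d * x"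
proof -
  have "1 < (2::real) powr d" using assms by simp
  then obtain k where "x < (2 powr d) ^ k" using real_arch_pow by blast
  then have "x \<le> 2 powr (real (max J k) * d)"
    using assms by (simp add: powr_power mult.commute order_trans[OF less_imp_le])
  then have ex: "\<exists>j. J \<le> j \<and> x \<le> 2 powr (real j * d)"
    by (intro exI[of _ "max J k"]) auto
  define j where "j = (LEAST j. J \<le> j \<and> x \<le> 2 powr (real j * d))"
  have j: "J \<le> j" "x \<le> 2 powr (real j * d)" using LeastI_ex[OF ex] by (auto simp: j_def)
  have "2 powr (real j * d) \<le> 2 powr d * x" if "j \<noteq> J"
  proof -
    have "j - 1 < j" using j that by simp
    then have "\<not> (J \<le> j - 1 \<and> x \<le> 2 powr (real (j - 1) * d))"
      using not_less_Least unfolding j_def by blast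
    then have "2 powr (real (j - 1) * d) < x" using j that by auto
    moreover have "2 powr (real j * d) = 2 powr d * 2 powr (real (j - 1) * d)"
      using j that by (simp add: of_nat_diff algebra_simps flip: powr_add)
    ultimately show ?thesis by simp
  qed
  then show ?thesis using that j by blast
qed

lemma sum_two_powr_le:
  fixes d :: real
  assumes "1 \<le> d"
  shows "(\<Sum>j<m. 2 powr (real j * d)) \<le> 2 powr (real m * d)"
proof (induction m)
  case (Suc m)
  have "2 \<le> (2::real) powr d" using powr_mono[OF assms, of 2] by simp
  then have "2 * 2 powr (real m * d) \<le> 2 powr d * 2 powr (real m * d)"
    by (intro mult_right_mono) auto
  then show ?case using Suc by (simp add: algebra_simps flip: powr_add)
qed simp

lemma exists_start_level:
  fixes A :: "nat \<Rightarrow> 'a set" and d t :: real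
  assumes "0 < C" "1 \<le> d" "0 < t" "\<And>j. real (card (A j)) \<le> C * 2 powr (real j * d)"
  obtains K where "0 < K"
    "\<And>n::nat. 1 \<le> n \<Longrightarrow> \<exists>j0. real (\<Sum>j<j0. card (A j)) \<le> real n / 2
       \<and> 2 powr (real j0 * d) \<le> K * real n \<and> 2 powr (- real j0 * t) \<le> K * real n powr (- t / d)"
proof -
  define c where "c = 2 * C * 2 powr d"
  define K where "K = max (1 + 1 / (2 * C)) (c powr (t / d))"
  have c: "0 < c" using assms by (simp add: c_def)
  have K: "1 \<le> K" "1 / (2 * C) \<le> K" "c powr (t / d) \<le> K"
    using assms by (auto simp: K_def le_max_iff_disj)
  show ?thesis
  proof (rule that)
    show "0 < K" using K by simp
    fix n :: nat
    assume n: "1 \<le> n"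
    obtain j0 where j0: "real n / c \<le> 2 powr (real j0 * d)"
      and small: "j0 = 0 \<or> 2 powr (real j0 * d) \<le> 2 powr d * (real n / c)"
      using exists_level_between[of d 0 "real n / c"] assms(2) by auto
    have small': "2 powr (real j0 * d) \<le> real n / (2 * C)" if "j0 \<noteq> 0"
      using small that assms(1) by (simp add: c_def)
    have "real (\<Sum>j<j0. card (A j)) \<le> real n / 2"
    proof (cases "j0 = 0")
      case False
      have "real (\<Sum>j<j0. card (A j)) \<le> (\<Sum>j<j0. C * 2 powr (real j * d))"
        using assms(4) by (simp add: sum_mono)
      also have "\<dots> \<le> C * 2 powr (real j0 * d)"
        using sum_two_powr_le[OF assms(2)] assms(1) by (simp add: sum_distrib_left[symmetric])
      also have "\<dots> \<le> real n / 2"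
        using small'[OF False] assms(1) by (simp add: field_simps)
      finally show ?thesis .
    qed simp
    moreover have "2 powr (real j0 * d) \<le> K * real n"
    proof (cases "j0 = 0")
      case True
      then show ?thesis using K n by (simp add: order_trans[OF _ mult_right_mono[of 1 K]])
    next
      case False
      have "real n / (2 * C) \<le> K * real n" using K n by (simp add: mult_right_mono divide_le_eq)
      then show ?thesis using small'[OF False] by linarith
    qed
    moreover have "2 powr (- real j0 * t) \<le> K * real n powr (- t / d)"
    proof -
      have "2 powr (- real j0 * t) = (2 powr (real j0 * d)) powr (- t / d)"
        using assms(2) by (simp add: powr_powr)
      also have "\<dots> \<le> (real n / c) powr (- t / d)"
        using j0 n c assms by (intro powr_mono2') auto
      also have "\<dots> = real n powr (- t / d) / c powr (- t / d)"
        using c by (intro powr_divide)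
      also have "\<dots> = c powr (t / d) * real n powr (- t / d)"
        unfolding minus_divide_left[symmetric] powr_minus by (simp add: divide_inverse mult.commute)
      also have "\<dots> \<le> K * real n powr (- t / d)" using K by (intro mult_right_mono) auto
      finally show ?thesis .
    qed
    ultimately show "\<exists>j0. real (\<Sum>j<j0. card (A j)) \<le> real n / 2
       \<and> 2 powr (real j0 * d) \<le> K * real n \<and> 2 powr (- real j0 * t) \<le> K * real n powr (- t / d)"
      by blast
  qed
qed

lemma powr_nat_mult_split:
  fixes x :: real
  assumes "x \<noteq> 0" "j0 \<le> j"
  shows "x powr (- real j * t) = x powr (- real j0 * t) * (x powr (- t)) ^ (j - j0)"
  using assms by (simp add: powr_power of_nat_diff algebra_simps flip: powr_add)

lemma level_weight_identity:
  fixes N d :: real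
  assumes "0 < N"
  shows "2 powr (real j * (s + d * (1/2 - i1)))
      * (N powr (i1 - i0) * 2 powr (- real j * (s + t + d * (1/2 - i0))))
    = 2 powr (- real j * t) * (2 powr (real j * d) / N) powr (i0 - i1)"
proof -
  have "(2 powr (real j * d) / N) powr (i0 - i1) = 2 powr (real j * d * (i0 - i1)) * N powr (i1 - i0)"
    using powr_minus_divide[of N "i0 - i1"] assms by (simp add: powr_divide powr_powr)
  moreover have "2 powr (real j * (s + d * (1/2 - i1))) * 2 powr (- real j * (s + t + d * (1/2 - i0)))
      = 2 powr (- real j * t) * 2 powr (real j * d * (i0 - i1))"
    by (simp add: algebra_simps flip: powr_add)
  ultimately show ?thesis by (simp add: mult_ac)
qed

lemma level_norm_le_of_block_norm_le:
  fixes Nab :: "nat \<Rightarrow> ('d::finite) idx set"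
  assumes "0 < N"
    and "block_norm p1 (Nab j) (u j) \<le> N powr (inv_exp p1 - inv_exp p0)
      * 2 powr (- real j * (s + t + real CARD('d) * (1/2 - inv_exp p0)))"
  shows "level_norm Nab s p1 u j
    \<le> 2 powr (- real j * t) * (2 powr (real j * real CARD('d)) / N) powr (inv_exp p0 - inv_exp p1)"
proof -
  have "level_norm Nab s p1 u j = 2 powr (real j * (s + real CARD('d) * (1/2 - inv_exp p1)))
      * block_norm p1 (Nab j) (u j)"
    by (simp add: level_norm_def)
  also have "\<dots> \<le> 2 powr (real j * (s + real CARD('d) * (1/2 - inv_exp p1)))
      * (N powr (inv_exp p1 - inv_exp p0) * 2 powr (- real j * (s + t + real CARD('d) * (1/2 - inv_exp p0))))"
    using assms(2) by (rule mult_left_mono) simp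
  also have "\<dots> = 2 powr (- real j * t) * (2 powr (real j * real CARD('d)) / N) powr (inv_exp p0 - inv_exp p1)"
    by (rule level_weight_identity[OF assms(1)])
  finally show ?thesis .
qed

section \<open>Lower bound\<close>

lemma sup_sigma_n_ge_level:
  fixes Nab :: "nat \<Rightarrow> ('d::finite) idx set"
  assumes "0 < p0" "0 < p1" "0 < q0" "0 < q1" "\<And>j. finite (Nab j)"
    and "2 * n \<le> card (Nab j)" "1 \<le> n"
  shows "ereal (2 powr (- inv_exp p1) * (2 powr (- real j * t)
      * (2 powr (real j * real CARD('d)) / real (card (Nab j))) powr (inv_exp p0 - inv_exp p1)))
    \<le> (SUP a \<in> {a. on_nabla Nab a \<and> bnorm Nab (s + t) p0 q0 a \<le> 1}. sigma_n Nab s p1 q1 n a)"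
proof -
  define N where "N = real (card (Nab j))"
  define W0 where "W0 = 2 powr (- real j * (s + t + real CARD('d) * (1/2 - inv_exp p0)))"
  define W1 where "W1 = 2 powr (real j * (s + real CARD('d) * (1/2 - inv_exp p1)))"
  define \<gamma> where "\<gamma> = N powr (- inv_exp p0) * W0"
  define a :: "'d sq" where "a j' l = (if j' = j \<and> l \<in> Nab j then \<gamma> else 0)" for j' l
  have N: "0 < N" using assms(6,7) by (simp add: N_def)
  have \<gamma>: "0 \<le> \<gamma>" by (simp add: \<gamma>_def W0_def)
  have a_level: "a j l = \<gamma>" if "l \<in> Nab j" for l using that by (simp add: a_def)
  have "block_norm p0 (Nab j) (a j) = block_norm p0 (Nab j) (\<lambda>_. \<gamma>)"
    by (intro block_norm_cong) (simp add: a_level)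
  also have "\<dots> = N powr inv_exp p0 * \<gamma>"
    using N block_norm_const[OF assms(5) _ \<gamma> assms(1), of j] by (auto simp: N_def card_gt_0_iff)
  finally have "level_norm Nab (s + t) p0 a j = (N powr inv_exp p0 * N powr (- inv_exp p0))
      * (2 powr (real j * (s + t + real CARD('d) * (1/2 - inv_exp p0))) * W0)"
    by (simp add: level_norm_def \<gamma>_def)
  also have "N powr inv_exp p0 * N powr (- inv_exp p0) = 1"
    using N by (simp flip: powr_add)
  also have "2 powr (real j * (s + t + real CARD('d) * (1/2 - inv_exp p0))) * W0 = 1"
    by (simp add: W0_def flip: powr_add)
  finally have "level_norm Nab (s + t) p0 a j = 1" by simp
  moreover have "bnorm Nab (s + t) p0 q0 a = ereal (level_norm Nab (s + t) p0 a j)"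
    by (rule bnorm_single_level[OF assms(3,5)]) (simp add: a_def)
  moreover have "on_nabla Nab a" by (simp add: on_nabla_def a_def)
  ultimately have unit_ball: "a \<in> {a. on_nabla Nab a \<and> bnorm Nab (s + t) p0 q0 a \<le> 1}" by simp
  have "(N / 2) powr inv_exp p1 = 2 powr (- inv_exp p1) * N powr inv_exp p1"
    using N by (simp add: powr_divide powr_minus_divide)
  moreover have "N powr (inv_exp p1 - inv_exp p0) = N powr inv_exp p1 * N powr (- inv_exp p0)"
    using powr_add[of N "inv_exp p1" "- inv_exp p0"] by simp
  ultimately have "W1 * (N / 2) powr inv_exp p1 * \<gamma>
      = 2 powr (- inv_exp p1) * (W1 * (N powr (inv_exp p1 - inv_exp p0) * W0))"
    by (simp add: \<gamma>_def)
  also have "W1 * (N powr (inv_exp p1 - inv_exp p0) * W0)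
      = 2 powr (- real j * t) * (2 powr (real j * real CARD('d)) / N) powr (inv_exp p0 - inv_exp p1)"
    unfolding W0_def W1_def by (rule level_weight_identity[OF N])
  finally have witness_value: "W1 * (N / 2) powr inv_exp p1 * \<gamma> = 2 powr (- inv_exp p1)
      * (2 powr (- real j * t) * (2 powr (real j * real CARD('d)) / N) powr (inv_exp p0 - inv_exp p1))" .
  have "ereal (W1 * (N / 2) powr inv_exp p1 * \<gamma>) \<le> sigma_n Nab s p1 q1 n a"
    using sigma_n_ge_constant_level[where Nab = Nab and a = a and j = j, OF assms(4,2,5) a_level \<gamma> assms(6,7)]
    unfolding N_def W1_def .
  also have "\<dots> \<le> (SUP a \<in> {a. on_nabla Nab a \<and> bnorm Nab (s + t) p0 q0 a \<le> 1}. sigma_n Nab s p1 q1 n a)"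
    using unit_ball by (rule SUP_upper)
  finally show ?thesis unfolding N_def[symmetric] witness_value[symmetric] .
qed

lemma exists_level_card_ge:
  fixes A :: "nat \<Rightarrow> 'a set" and d :: real
  assumes "0 < C" "0 < d" "\<And>j. J \<le> j \<Longrightarrow> C * 2 powr (real j * d) \<le> real (card (A j))"
  obtains K where "0 < K"
    "\<And>n::nat. 1 \<le> n \<Longrightarrow> \<exists>j\<ge>J. 2 * n \<le> card (A j) \<and> 2 powr (real j * d) \<le> K * real n"
proof -
  define K where "K = 2 powr (real J * d) + 2 powr d * 2 / C"
  show ?thesis
  proof (rule that)
    show K: "0 < K" using assms(1) by (simp add: K_def add_pos_pos)
    fix n :: nat
    assume n: "1 \<le> n"
    obtain j where j: "J \<le> j" "2 * real n / C \<le> 2 powr (real j * d)"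
      and close: "j = J \<or> 2 powr (real j * d) \<le> 2 powr d * (2 * real n / C)"
      using exists_level_between[OF assms(2), of J "2 * real n / C"] by auto
    have "2 * real n \<le> C * 2 powr (real j * d)" using j(2) assms(1) by (simp add: field_simps)
    then have "2 * n \<le> card (A j)" using assms(3)[OF j(1)] by linarith
    moreover have "2 powr (real j * d) \<le> K * real n"
    proof (cases "j = J")
      case True
      then have "2 powr (real j * d) \<le> K" using assms(1) by (simp add: K_def)
      also have "K \<le> K * real n" using K n by simp
      finally show ?thesis .
    next
      case False
      then have "2 powr (real j * d) \<le> 2 powr d * 2 / C * real n" using close by simp
      also have "\<dots> \<le> K * real n" by (intro mult_right_mono) (auto simp: K_def)
      finally show ?thesis .
    qed
    ultimately show "\<exists>j\<ge>J. 2 * n \<le> card (A j) \<and> 2 powr (real j * d) \<le> K * real n"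
      using j(1) by blast
  qed
qed

lemma sup_sigma_n_lower_bound:
  fixes Nab :: "nat \<Rightarrow> ('d::finite) idx set"
  assumes "admissible_nabla Nab" "0 < p0" "0 < p1" "0 < q0" "0 < q1" "0 < t"
  obtains c1 where "0 < c1" "\<And>n. 1 \<le> n \<Longrightarrow> ereal (c1 * real n powr (- t / real CARD('d)))
    \<le> (SUP a \<in> {a. on_nabla Nab a \<and> bnorm Nab (s + t) p0 q0 a \<le> 1}. sigma_n Nab s p1 q1 n a)"
proof -
  define d where "d = real CARD('d)"
  define r where "r = inv_exp p0 - inv_exp p1"
  have d: "1 \<le> d" by (simp add: d_def Suc_le_eq)
  obtain C1 C2 J where C: "0 < C1" "0 < C2" and fin: "\<And>j. finite (Nab j)"
    and lower: "\<And>j. J \<le> j \<Longrightarrow> C1 * 2 powr (real j * d) \<le> real (card (Nab j))"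
    and upper: "\<And>j. real (card (Nab j)) \<le> C2 * 2 powr (real j * d)"
    using admissible_nabla_card_bounds[OF assms(1)] unfolding d_def by blast
  obtain K where K: "0 < K"
    and level: "\<And>n::nat. 1 \<le> n \<Longrightarrow> \<exists>j\<ge>J. 2 * n \<le> card (Nab j) \<and> 2 powr (real j * d) \<le> K * real n"
    using exists_level_card_ge[OF C(1) _ lower] d by auto
  define m where "m = min ((1 / C2) powr r) ((1 / C1) powr r)"
  define c1 where "c1 = 2 powr (- inv_exp p1) * K powr (- t / d) * m"
  show ?thesis
  proof (rule that)
    show "0 < c1" using K C by (simp add: c1_def m_def)
    fix n :: nat
    assume "1 \<le> n"
    then obtain j where "J \<le> j" and card: "2 * n \<le> card (Nab j)" and "2 powr (real j * d) \<le> K * real n"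
      and n: "1 \<le> n" using level by blast
    define E where "E = 2 powr (real j * d)"
    define N where "N = real (card (Nab j))"
    have E: "0 < E" by (simp add: E_def)
    have N: "C1 * E \<le> N" "N \<le> C2 * E" "0 < N"
      using lower[OF \<open>J \<le> j\<close>] upper[of j] card n by (simp_all add: E_def N_def)
    have "(K * real n) powr (- t / d) \<le> E powr (- t / d)"
      using \<open>2 powr (real j * d) \<le> K * real n\<close> E d assms(6) by (intro powr_mono2') (auto simp: E_def)
    then have decay: "K powr (- t / d) * real n powr (- t / d) \<le> 2 powr (- real j * t)"
      using d by (simp add: E_def powr_mult powr_powr)
    have ratio: "m \<le> (E / N) powr r"
    proof (cases "0 \<le> r")
      case True
      have "1 / C2 \<le> E / N" using N C E by (simp add: field_simps)
      then show ?thesis using True C by (simp add: m_def min.coboundedI1 powr_mono2)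
    next
      case False
      have "E / N \<le> 1 / C1" using N C E by (simp add: field_simps)
      then have "(1 / C1) powr r \<le> (E / N) powr r" using False E N by (intro powr_mono2') auto
      then show ?thesis by (simp add: m_def min.coboundedI2)
    qed
    have "K powr (- t / d) * real n powr (- t / d) * m \<le> 2 powr (- real j * t) * (E / N) powr r"
      using C by (intro mult_mono[OF decay ratio]) (auto simp: m_def)
    then have "c1 * real n powr (- t / d) \<le> 2 powr (- inv_exp p1) * (2 powr (- real j * t) * (E / N) powr r)"
      by (simp add: c1_def mult_ac)
    also have "ereal \<dots> \<le> (SUP a \<in> {a. on_nabla Nab a \<and> bnorm Nab (s + t) p0 q0 a \<le> 1}. sigma_n Nab s p1 q1 n a)"
      using sup_sigma_n_ge_level[where Nab = Nab, OF assms(2-5) fin card n] by (simp add: E_def N_def d_def r_def)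
    finally show "ereal (c1 * real n powr (- t / real CARD('d)))
      \<le> (SUP a \<in> {a. on_nabla Nab a \<and> bnorm Nab (s + t) p0 q0 a \<le> 1}. sigma_n Nab s p1 q1 n a)"
      by (simp add: d_def)
  qed
qed

section \<open>Upper bound\<close>

lemma card_Sigma_geometric_le:
  fixes A T :: "nat \<Rightarrow> 'a set"
  assumes "\<And>j. finite (A j)" "\<And>j. finite (T j)" "\<And>j. real (card (T j)) \<le> M * \<theta> ^ (j - j0)"
    and "0 \<le> M" "0 \<le> \<theta>" "\<theta> < 1"
  shows "finite (Sigma {..<j0} A \<union> Sigma {j0..} T)"
    and "real (card (Sigma {..<j0} A \<union> Sigma {j0..} T)) \<le> (\<Sum>j<j0. real (card (A j))) + M / (1 - \<theta>)"
proof -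
  obtain k where k: "M * \<theta> ^ k < 1"
  proof (cases "M = 0")
    case False
    then obtain k where "\<theta> ^ k < 1 / M" using real_arch_pow_inv[of "1 / M" \<theta>] assms(4,6) by auto
    then show ?thesis using that[of k] False assms(4) by (simp add: field_simps)
  qed simp
  have "T j = {}" if "j0 + k \<le> j" for j
  proof -
    have "M * \<theta> ^ (j - j0) \<le> M * \<theta> ^ k"
      using that assms(4-6) by (intro mult_left_mono power_decreasing) auto
    then have "card (T j) = 0" using assms(3)[of j] k by linarith
    then show ?thesis using assms(2) by simp
  qed
  then have tail: "Sigma {j0..} T = Sigma {j0..<j0 + k} T"
    by (auto simp: not_le[symmetric])
  show fin: "finite (Sigma {..<j0} A \<union> Sigma {j0..} T)"
    unfolding tail using assms(1,2) by auto
  have "(\<Sum>j = j0..<j0 + k. real (card (T j))) \<le> (\<Sum>j = j0..<j0 + k. M * \<theta> ^ (j - j0))"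
    by (intro sum_mono assms(3))
  also have "\<dots> = (\<Sum>i<k. M * \<theta> ^ i)"
    using sum.shift_bounds_nat_ivl[of "\<lambda>j. M * \<theta> ^ (j - j0)" 0 j0 k]
    by (simp add: lessThan_atLeast0 add.commute)
  also have "\<dots> = M * (\<Sum>i<k. \<theta> ^ i)" by (simp add: sum_distrib_left)
  also have "\<dots> \<le> M * (1 / (1 - \<theta>))"
  proof (rule mult_left_mono)
    show "(\<Sum>i<k. \<theta> ^ i) \<le> 1 / (1 - \<theta>)"
      using assms(5,6) by (simp add: sum_gp_strict divide_right_mono)
  qed (rule assms(4))
  finally have T: "(\<Sum>j = j0..<j0 + k. real (card (T j))) \<le> M / (1 - \<theta>)" by simp
  have "card (Sigma {..<j0} A \<union> Sigma {j0..} T) \<le> card (Sigma {..<j0} A) + card (Sigma {j0..<j0 + k} T)"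
    unfolding tail by (rule card_Un_le)
  also have "\<dots> = (\<Sum>j<j0. card (A j)) + (\<Sum>j = j0..<j0 + k. card (T j))"
    using assms(1,2) by (simp add: card_SigmaI)
  finally have "real (card (Sigma {..<j0} A \<union> Sigma {j0..} T))
      \<le> real ((\<Sum>j<j0. card (A j)) + (\<Sum>j = j0..<j0 + k. card (T j)))"
    by (rule of_nat_mono)
  then show "real (card (Sigma {..<j0} A \<union> Sigma {j0..} T)) \<le> (\<Sum>j<j0. real (card (A j))) + M / (1 - \<theta>)"
    using T by simp
qed

lemma level_norm_le_hoelder:
  fixes Nab :: "nat \<Rightarrow> ('d::finite) idx set"
  assumes "0 < p0" "0 < p1" "0 < q0" "inv_exp p0 \<le> inv_exp p1"
    and "\<And>j. finite (Nab j)" "bnorm Nab (s + t) p0 q0 a \<le> 1"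
    and "0 < C" "real (card (Nab j)) \<le> C * 2 powr (real j * real CARD('d))"
  shows "level_norm Nab s p1 a j \<le> C powr (inv_exp p1 - inv_exp p0) * 2 powr (- real j * t)"
proof (cases "Nab j = {}")
  case True
  then have "level_norm Nab s p1 a j = 0" by (intro level_norm_zero) auto
  then show ?thesis by simp
next
  case False
  define N where "N = real (card (Nab j))"
  define E where "E = 2 powr (real j * real CARD('d))"
  have N: "0 < N" using False assms(5) by (simp add: N_def card_gt_0_iff)
  have "block_norm p1 (Nab j) (a j) \<le> N powr (inv_exp p1 - inv_exp p0) * block_norm p0 (Nab j) (a j)"
    unfolding N_def by (rule block_norm_le_card_powr[OF assms(5,1,2,4)])
  also have "\<dots> \<le> N powr (inv_exp p1 - inv_exp p0)
      * 2 powr (- real j * (s + t + real CARD('d) * (1/2 - inv_exp p0)))"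
    using block_norm_le_of_bnorm_le_1[OF assms(3,5,6)] by (intro mult_left_mono) auto
  finally have "level_norm Nab s p1 a j \<le> 2 powr (- real j * t) * (E / N) powr (inv_exp p0 - inv_exp p1)"
    unfolding E_def by (rule level_norm_le_of_block_norm_le[OF N])
  also have "(E / N) powr (inv_exp p0 - inv_exp p1) \<le> (1 / C) powr (inv_exp p0 - inv_exp p1)"
  proof (rule powr_mono2')
    show "0 < 1 / C" using assms(7) by simp
    show "1 / C \<le> E / N" using assms(7,8) N by (simp add: E_def N_def field_simps)
  qed (use assms(4) in auto)
  also have "(1 / C) powr (inv_exp p0 - inv_exp p1) = C powr (inv_exp p1 - inv_exp p0)"
    using assms(7) powr_minus_divide[of C "inv_exp p0 - inv_exp p1"] by (simp add: powr_divide)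
  finally show ?thesis by (simp add: mult.commute)
qed

lemma geometric_budget_identity:
  fixes d r t \<mu> M :: real
  assumes "j0 \<le> j" "0 < M" "0 < r" "t = d * r + 2 * \<mu>"
  shows "2 powr (- real j * t) * (2 powr (real j * d) / (M * (2 powr (- \<mu> / r)) ^ (j - j0))) powr r
    = 2 powr (- real j0 * t) * (2 powr (real j0 * d) / M) powr r * (2 powr (- \<mu>)) ^ (j - j0)"
proof -
  define k where "k = j - j0"
  have j: "real j = real j0 + real k" using assms(1) by (simp add: k_def)
  have "(2 powr (- \<mu> / r)) ^ k = 2 powr (- (real k * \<mu> / r))"
    by (simp add: powr_power)
  then have "(2 powr (real j * d) / (M * (2 powr (- \<mu> / r)) ^ k)) powr r
      = (2 powr (real j * d)) powr r / (M powr r * (2 powr (- (real k * \<mu> / r))) powr r)"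
    using assms(2,3) by (simp add: powr_divide powr_mult)
  also have "\<dots> = 2 powr (real j * d * r) / (M powr r * 2 powr (- (real k * \<mu>)))"
    using assms(3) by (simp add: powr_powr)
  also have "\<dots> = 2 powr (real j * d * r + real k * \<mu>) * M powr (- r)"
    by (simp add: powr_add powr_minus divide_inverse)
  finally have "(2 powr (real j * d) / (M * (2 powr (- \<mu> / r)) ^ k)) powr r
      = 2 powr (real j * d * r + real k * \<mu>) * M powr (- r)" .
  moreover have "(2 powr (real j0 * d) / M) powr r = 2 powr (real j0 * d * r) * M powr (- r)"
    using assms(2) by (simp add: powr_divide powr_powr powr_minus_divide)
  moreover have "2 powr (- real j * t) * 2 powr (real j * d * r + real k * \<mu>)
      = 2 powr (- real j0 * t) * 2 powr (real j0 * d * r) * (2 powr (- \<mu>)) ^ k"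
    unfolding j assms(4) by (simp add: powr_power algebra_simps flip: powr_add)
  ultimately show ?thesis by (simp add: k_def mult_ac)
qed

lemma sigma_n_le_hoelder:
  fixes Nab :: "nat \<Rightarrow> ('d::finite) idx set"
  assumes "0 < p0" "0 < p1" "0 < q0" "0 < q1" "0 < t" "inv_exp p0 \<le> inv_exp p1"
    and "\<And>j. finite (Nab j)" "l1 \<in> Nab j1" "bnorm Nab (s + t) p0 q0 a \<le> 1"
    and "0 < C" "\<And>j. real (card (Nab j)) \<le> C * 2 powr (real j * real CARD('d))"
    and "(\<Sum>j<j0. card (Nab j)) \<le> n"
  shows "sigma_n Nab s p1 q1 n a \<le> ereal (C powr (inv_exp p1 - inv_exp p0) * 2 powr (- real j0 * t)
    * geometric_lq_norm q1 (2 powr (- t)))"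
proof (rule sigma_n_le_geometric[where Nab = Nab and S = "Sigma {..<j0} Nab" and ?j0.0 = j0, OF assms(4,7,8)])
  show "finite (Sigma {..<j0} Nab)" using assms(7) by auto
  show "card (Sigma {..<j0} Nab) \<le> n" using assms(7,12) by (simp add: card_SigmaI)
  show "2 powr (- t) < 1" using assms(5) by (simp add: powr_less_one)
  fix j assume "j0 \<le> j"
  have "level_norm Nab s p1 (\<lambda>j l. if (j, l) \<in> Sigma {..<j0} Nab then 0 else a j l) j
      = level_norm Nab s p1 a j"
    using \<open>j0 \<le> j\<close> by (intro level_norm_cong) auto
  also have "\<dots> \<le> C powr (inv_exp p1 - inv_exp p0) * 2 powr (- real j * t)"
    by (rule level_norm_le_hoelder[OF assms(1-3,6,7,9,10,11)])
  also have "\<dots> = C powr (inv_exp p1 - inv_exp p0) * 2 powr (- real j0 * t) * (2 powr (- t)) ^ (j - j0)"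
    using powr_nat_mult_split[of 2 j0 j t] \<open>j0 \<le> j\<close> by simp
  finally show "level_norm Nab s p1 (\<lambda>j l. if (j, l) \<in> Sigma {..<j0} Nab then 0 else a j l) j
      \<le> C powr (inv_exp p1 - inv_exp p0) * 2 powr (- real j0 * t) * (2 powr (- t)) ^ (j - j0)" .
qed auto

lemma sigma_n_le_thresholding:
  fixes Nab :: "nat \<Rightarrow> ('d::finite) idx set" and \<mu> M :: real
  assumes "0 < p0" "0 < p1" "0 < q0" "0 < q1" "inv_exp p1 < inv_exp p0"
    and "t = real CARD('d) * (inv_exp p0 - inv_exp p1) + 2 * \<mu>" "0 < \<mu>"
    and "\<And>j. finite (Nab j)" "l1 \<in> Nab j1" "bnorm Nab (s + t) p0 q0 a \<le> 1"
    and "0 < M"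
    and "(\<Sum>j<j0. real (card (Nab j))) + M / (1 - 2 powr (- \<mu> / (inv_exp p0 - inv_exp p1))) \<le> real n"
  shows "sigma_n Nab s p1 q1 n a \<le> ereal (2 powr (- real j0 * t)
    * (2 powr (real j0 * real CARD('d)) / M) powr (inv_exp p0 - inv_exp p1)
    * geometric_lq_norm q1 (2 powr (- \<mu>)))"
proof -
  define r where "r = inv_exp p0 - inv_exp p1"
  \<comment> \<open>with budgets \<open>N\<^sub>j\<close> shrinking by \<open>2\<^sup>-\<^sup>\<mu>\<^sup>/\<^sup>r\<close> per level, the level errors
    \<open>2\<^sup>-\<^sup>j\<^sup>t (2\<^sup>j\<^sup>d / N\<^sub>j)\<^sup>r\<close> still decay by \<open>2\<^sup>-\<^sup>\<mu>\<close> per level\<close>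
  define \<theta> where "\<theta> = 2 powr (- \<mu> / r)"
  define budget where "budget j = M * \<theta> ^ (j - j0)" for j
  define \<alpha> where "\<alpha> j = 2 powr (- real j * (s + t + real CARD('d) * (1/2 - inv_exp p0)))" for j
  define T where "T j = {l \<in> Nab j. \<alpha> j * budget j powr (- inv_exp p0) < \<bar>a j l\<bar>}" for j
  define S where "S = Sigma {..<j0} Nab \<union> Sigma {j0..} T"
  have r: "0 < r" using assms(5) by (simp add: r_def)
  have \<theta>: "0 < \<theta>" "\<theta> < 1" using r assms(7) by (auto simp: \<theta>_def powr_less_one)
  have budget: "0 < budget j" for j using assms(11) \<theta> by (simp add: budget_def)
  have p0: "p0 \<noteq> \<infinity>" using assms(5) inv_exp_nonneg[OF assms(2)] by auto
  have \<alpha>: "block_norm p0 (Nab j) (a j) \<le> \<alpha> j" "0 < \<alpha> j" for j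
    using block_norm_le_of_bnorm_le_1[OF assms(3,8,10)] by (simp_all add: \<alpha>_def)
  have "real (card (T j)) \<le> M * \<theta> ^ (j - j0)" for j
    using card_large_entries_le[OF assms(1) p0 assms(8) \<alpha> budget] by (simp add: T_def budget_def)
  then have "finite S" "real (card S) \<le> (\<Sum>j<j0. real (card (Nab j))) + M / (1 - \<theta>)"
    using card_Sigma_geometric_le[of Nab T M \<theta> j0] assms(8,11) \<theta> by (auto simp: S_def T_def)
  then have card_S: "card S \<le> n" using assms(12) by (simp add: \<theta>_def r_def)
  show ?thesis
  proof (rule sigma_n_le_geometric[where Nab = Nab and S = S and ?j0.0 = j0, OF assms(4,8,9) \<open>finite S\<close> card_S])
    show "S \<subseteq> Sigma UNIV Nab" by (auto simp: S_def T_def)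
    show "(j, l) \<in> S" if "j < j0" "l \<in> Nab j" for j l using that by (simp add: S_def)
    show "0 < 2 powr (- \<mu>)" "2 powr (- \<mu>) < 1" using assms(7) by (simp_all add: powr_less_one)
    fix j assume "j0 \<le> j"
    have "level_norm Nab s p1 (\<lambda>j l. if (j, l) \<in> S then 0 else a j l) j
        = level_norm Nab s p1 (\<lambda>j l. if \<alpha> j * budget j powr (- inv_exp p0) < \<bar>a j l\<bar> then 0 else a j l) j"
      using \<open>j0 \<le> j\<close> by (intro level_norm_cong) (auto simp: S_def T_def)
    also have "\<dots> \<le> 2 powr (- real j * t) * (2 powr (real j * real CARD('d)) / budget j) powr r"
      unfolding r_def
    proof (rule level_norm_le_of_block_norm_le[OF budget])
      show "block_norm p1 (Nab j) (\<lambda>l. if \<alpha> j * budget j powr (- inv_exp p0) < \<bar>a j l\<bar> then 0 else a j l)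
          \<le> budget j powr (inv_exp p1 - inv_exp p0)
            * 2 powr (- real j * (s + t + real CARD('d) * (1 / 2 - inv_exp p0)))"
        using block_norm_small_entries_le[OF assms(1) p0 assms(2) _ assms(8) \<alpha> budget] assms(5)
        by (simp add: \<alpha>_def mult.commute)
    qed
    also have "\<dots> = 2 powr (- real j0 * t) * (2 powr (real j0 * real CARD('d)) / M) powr r
        * (2 powr (- \<mu>)) ^ (j - j0)"
      unfolding budget_def \<theta>_def
      by (rule geometric_budget_identity[OF \<open>j0 \<le> j\<close> assms(11) r assms(6)[folded r_def]])
    finally show "level_norm Nab s p1 (\<lambda>j l. if (j, l) \<in> S then 0 else a j l) j
        \<le> 2 powr (- real j0 * t) * (2 powr (real j0 * real CARD('d)) / M) powr (inv_exp p0 - inv_exp p1)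
          * (2 powr (- \<mu>)) ^ (j - j0)"
      by (simp add: r_def)
  qed simp
qed

lemma admissible_nabla_start_level:
  fixes Nab :: "nat \<Rightarrow> ('d::finite) idx set"
  assumes "admissible_nabla Nab" "0 < t"
  obtains C K l1 j1 where "0 < C" "0 < K" "\<And>j. finite (Nab j)" "l1 \<in> Nab j1"
    "\<And>j. real (card (Nab j)) \<le> C * 2 powr (real j * real CARD('d))"
    "\<And>n::nat. 1 \<le> n \<Longrightarrow> \<exists>j0. real (\<Sum>j<j0. card (Nab j)) \<le> real n / 2
       \<and> 2 powr (real j0 * real CARD('d)) \<le> K * real n
       \<and> 2 powr (- real j0 * t) \<le> K * real n powr (- t / real CARD('d))"
proof -
  obtain C1 C J where C: "0 < C1" "0 < C" and fin: "\<And>j. finite (Nab j)"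
    and lower: "C1 * 2 powr (real J * real CARD('d)) \<le> real (card (Nab J))"
    and upper: "\<And>j. real (card (Nab j)) \<le> C * 2 powr (real j * real CARD('d))"
    using admissible_nabla_card_bounds[OF assms(1)] by (metis order_refl)
  have "0 < C1 * 2 powr (real J * real CARD('d))" using C(1) by simp
  then have "Nab J \<noteq> {}" using lower by auto
  then obtain l1 where l1: "l1 \<in> Nab J" by blast
  obtain K where K: "0 < K" and start: "\<And>n::nat. 1 \<le> n \<Longrightarrow> \<exists>j0. real (\<Sum>j<j0. card (Nab j)) \<le> real n / 2
       \<and> 2 powr (real j0 * real CARD('d)) \<le> K * real n
       \<and> 2 powr (- real j0 * t) \<le> K * real n powr (- t / real CARD('d))"
    using exists_start_level[OF C(2) _ assms(2) upper] by (auto simp: Suc_le_eq)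
  show ?thesis by (rule that[OF C(2) K fin l1 upper start])
qed

lemma sup_sigma_n_upper_bound_hoelder:
  fixes Nab :: "nat \<Rightarrow> ('d::finite) idx set"
  assumes "admissible_nabla Nab" "0 < p0" "0 < p1" "0 < q0" "0 < q1" "0 < t"
    and "inv_exp p0 \<le> inv_exp p1"
  obtains c2 where "0 < c2" "\<And>n. 1 \<le> n \<Longrightarrow>
    (SUP a \<in> {a. on_nabla Nab a \<and> bnorm Nab (s + t) p0 q0 a \<le> 1}. sigma_n Nab s p1 q1 n a)
      \<le> ereal (c2 * real n powr (- t / real CARD('d)))"
proof -
  obtain C K l1 j1 where C: "0 < C" and K: "0 < K" and fin: "\<And>j. finite (Nab j)" and l1: "l1 \<in> Nab j1"
    and upper: "\<And>j. real (card (Nab j)) \<le> C * 2 powr (real j * real CARD('d))"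
    and start: "\<And>n::nat. 1 \<le> n \<Longrightarrow> \<exists>j0. real (\<Sum>j<j0. card (Nab j)) \<le> real n / 2
       \<and> 2 powr (real j0 * real CARD('d)) \<le> K * real n
       \<and> 2 powr (- real j0 * t) \<le> K * real n powr (- t / real CARD('d))"
    using admissible_nabla_start_level[OF assms(1,6)] by blast
  define G where "G = geometric_lq_norm q1 (2 powr (- t))"
  define c2 where "c2 = C powr (inv_exp p1 - inv_exp p0) * K * G"
  have G: "0 < G"
    unfolding G_def using assms(5,6) by (intro geometric_lq_norm_pos) (auto simp: powr_less_one)
  show ?thesis
  proof (rule that)
    show "0 < c2" using C K G by (simp add: c2_def)
    fix n :: nat
    assume "1 \<le> n"
    then obtain j0 where "real (\<Sum>j<j0. card (Nab j)) \<le> real n / 2"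
      and decay: "2 powr (- real j0 * t) \<le> K * real n powr (- t / real CARD('d))"
      using start by blast
    then have few: "(\<Sum>j<j0. card (Nab j)) \<le> n" by linarith
    show "(SUP a \<in> {a. on_nabla Nab a \<and> bnorm Nab (s + t) p0 q0 a \<le> 1}. sigma_n Nab s p1 q1 n a)
      \<le> ereal (c2 * real n powr (- t / real CARD('d)))"
    proof (rule SUP_least, clarify)
      fix a assume "on_nabla Nab a" "bnorm Nab (s + t) p0 q0 a \<le> 1"
      then have "sigma_n Nab s p1 q1 n a
          \<le> ereal (C powr (inv_exp p1 - inv_exp p0) * 2 powr (- real j0 * t) * G)"
        unfolding G_def by (intro sigma_n_le_hoelder[where Nab = Nab, OF assms(2-7) fin l1 _ C upper few])
      also have "\<dots> \<le> ereal (c2 * real n powr (- t / real CARD('d)))"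
        using mult_right_mono[OF mult_left_mono[OF decay, of "C powr (inv_exp p1 - inv_exp p0)"], of G] G
        by (simp add: c2_def mult_ac)
      finally show "sigma_n Nab s p1 q1 n a \<le> ereal (c2 * real n powr (- t / real CARD('d)))" .
    qed
  qed
qed

lemma sup_sigma_n_upper_bound_thresholding:
  fixes Nab :: "nat \<Rightarrow> ('d::finite) idx set"
  assumes "admissible_nabla Nab" "0 < p0" "0 < p1" "0 < q0" "0 < q1"
    and "inv_exp p1 < inv_exp p0" "real CARD('d) * (inv_exp p0 - inv_exp p1) < t"
  obtains c2 where "0 < c2" "\<And>n. 1 \<le> n \<Longrightarrow>
    (SUP a \<in> {a. on_nabla Nab a \<and> bnorm Nab (s + t) p0 q0 a \<le> 1}. sigma_n Nab s p1 q1 n a)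
      \<le> ereal (c2 * real n powr (- t / real CARD('d)))"
proof -
  define r where "r = inv_exp p0 - inv_exp p1"
  define \<mu> where "\<mu> = (t - real CARD('d) * r) / 2"
  define \<theta> where "\<theta> = 2 powr (- \<mu> / r)"
  have r: "0 < r" using assms(6) by (simp add: r_def)
  have \<mu>: "0 < \<mu>" "t = real CARD('d) * r + 2 * \<mu>"
    using assms(7) by (simp_all add: \<mu>_def r_def field_simps)
  have t: "0 < t" using \<mu> r by (simp add: add_nonneg_pos)
  have \<theta>: "0 < \<theta>" "\<theta> < 1" using r \<mu> by (auto simp: \<theta>_def powr_less_one)
  obtain C K l1 j1 where "0 < C" and K: "0 < K" and fin: "\<And>j. finite (Nab j)" and l1: "l1 \<in> Nab j1"
    and "\<And>j. real (card (Nab j)) \<le> C * 2 powr (real j * real CARD('d))"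
    and start: "\<And>n::nat. 1 \<le> n \<Longrightarrow> \<exists>j0. real (\<Sum>j<j0. card (Nab j)) \<le> real n / 2
       \<and> 2 powr (real j0 * real CARD('d)) \<le> K * real n
       \<and> 2 powr (- real j0 * t) \<le> K * real n powr (- t / real CARD('d))"
    using admissible_nabla_start_level[OF assms(1) t] by blast
  define G where "G = geometric_lq_norm q1 (2 powr (- \<mu>))"
  define c2 where "c2 = (2 * K / (1 - \<theta>)) powr r * K * G"
  have G: "0 < G"
    unfolding G_def using assms(5) \<mu> by (intro geometric_lq_norm_pos) (auto simp: powr_less_one)
  show ?thesis
  proof (rule that)
    show "0 < c2" using K \<theta> G by (simp add: c2_def)
    fix n :: nat
    assume n: "1 \<le> n"
    then obtain j0 where few: "real (\<Sum>j<j0. card (Nab j)) \<le> real n / 2"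
      and start_size: "2 powr (real j0 * real CARD('d)) \<le> K * real n"
      and decay: "2 powr (- real j0 * t) \<le> K * real n powr (- t / real CARD('d))"
      using start by blast
    define M where "M = (1 - \<theta>) * real n / 2"
    have M: "0 < M" using \<theta> n by (simp add: M_def)
    have "M / (1 - \<theta>) = real n / 2" using \<theta> by (simp add: M_def field_simps)
    then have budget: "(\<Sum>j<j0. real (card (Nab j))) + M / (1 - \<theta>) \<le> real n"
      using few by simp
    have "2 powr (real j0 * real CARD('d)) / M \<le> K * real n / M"
      using start_size M by (simp add: divide_right_mono)
    also have "K * real n / M = 2 * K / (1 - \<theta>)"
      using \<theta> n by (simp add: M_def field_simps)
    finally have ratio: "(2 powr (real j0 * real CARD('d)) / M) powr r \<le> (2 * K / (1 - \<theta>)) powr r"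
      using r M by (intro powr_mono2) auto
    show "(SUP a \<in> {a. on_nabla Nab a \<and> bnorm Nab (s + t) p0 q0 a \<le> 1}. sigma_n Nab s p1 q1 n a)
      \<le> ereal (c2 * real n powr (- t / real CARD('d)))"
    proof (rule SUP_least, clarify)
      fix a assume "on_nabla Nab a" "bnorm Nab (s + t) p0 q0 a \<le> 1"
      then have "sigma_n Nab s p1 q1 n a \<le> ereal (2 powr (- real j0 * t)
          * (2 powr (real j0 * real CARD('d)) / M) powr r * G)"
        unfolding r_def G_def
        by (intro sigma_n_le_thresholding[where Nab = Nab, OF assms(2-6) \<mu>(2)[unfolded r_def] \<mu>(1)
              fin l1 _ M budget[unfolded \<theta>_def r_def]])
      also have "\<dots> \<le> ereal (c2 * real n powr (- t / real CARD('d)))"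
        using mult_right_mono[OF mult_mono[OF decay ratio], of G] G K by (simp add: c2_def mult_ac)
      finally show "sigma_n Nab s p1 q1 n a \<le> ereal (c2 * real n powr (- t / real CARD('d)))" .
    qed
  qed
qed

theorem theorem7:
  fixes Nab :: "nat \<Rightarrow> ('d::finite) idx set"
    and p0 p1 q0 q1 :: ereal and s t :: real
  assumes "admissible_nabla Nab"
    and "0 < p0" and "0 < p1" and "0 < q0" and "0 < q1"
    and "t > 0"
    and "t > real CARD('d) * max 0 (inv_exp p0 - inv_exp p1)"
  shows "\<exists>c1 c2. 0 < c1 \<and> 0 < c2 \<and> (\<forall>n::nat. n \<ge> 1 \<longrightarrow>
     ereal (c1 * real n powr (- t / real CARD('d)))
       \<le> (SUP a \<in> {a. on_nabla Nab a \<and> bnorm Nab (s + t) p0 q0 a \<le> 1}.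
             sigma_n Nab s p1 q1 n a)
   \<and> (SUP a \<in> {a. on_nabla Nab a \<and> bnorm Nab (s + t) p0 q0 a \<le> 1}.
             sigma_n Nab s p1 q1 n a)
       \<le> ereal (c2 * real n powr (- t / real CARD('d))))"
proof -
  obtain c1 where "0 < c1" "\<And>n. 1 \<le> n \<Longrightarrow> ereal (c1 * real n powr (- t / real CARD('d)))
    \<le> (SUP a \<in> {a. on_nabla Nab a \<and> bnorm Nab (s + t) p0 q0 a \<le> 1}. sigma_n Nab s p1 q1 n a)"
    using sup_sigma_n_lower_bound[OF assms(1-6)] by blast
  moreover obtain c2 where "0 < c2" "\<And>n. 1 \<le> n \<Longrightarrow>
    (SUP a \<in> {a. on_nabla Nab a \<and> bnorm Nab (s + t) p0 q0 a \<le> 1}. sigma_n Nab s p1 q1 n a)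
      \<le> ereal (c2 * real n powr (- t / real CARD('d)))"
  proof (cases "inv_exp p0 \<le> inv_exp p1")
    case True
    show ?thesis by (rule sup_sigma_n_upper_bound_hoelder[where s = s, OF assms(1-6) True that])
  next
    case False
    then have "real CARD('d) * (inv_exp p0 - inv_exp p1) < t" using assms(7) by simp
    with False show ?thesis
      by (intro sup_sigma_n_upper_bound_thresholding[where s = s, OF assms(1-5) _ _ that]) auto
  qed
  ultimately show ?thesis by blast
qed

end
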